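(* For every $N$, every $f<N$ and every $K\in\mathbb N$, there exists a deterministic solution to the $K$-round Marker Problem tolerating $f$ faults, with message complexity $O(N(f+1))$ per round, signature complexity $O(N(f+1)^2)$ per round, and $T=O(f+1)$ steps per round.
   Context: Model. There are $N$ processes $P_1,\dots,P_N$; $[N]=\{1,\dots,N\}$. Time proceeds in discrete steps $t=0,1,2,\dots$ (synchronous network). At each step every process first receives all messages sent to it at the previous step, each together with the identity of its sender, and then may send messages to any processes; the behaviour of an honest process is given by its protocol, a deterministic function of its inputs and of all messages it has received so far. Communication is authenticated: a process $P_j$ can sign a string $m$, producing $(m)_{P_j}$; every sent message is signed by its sender; no process other than $P_j$ can produce a string containing $(m)_{P_j}$ unless it copied it from a message it received, except that corrupted processes can produce signatures of any corrupted process. An $f$-adversary knows all protocols and all inputs (including future inputs), chooses at time $0$ a set of at most $f$ processes to corrupt, and makes them behave arbitrarily subject to the signature rule; the other processes are honest and follow their protocol. $\mathcal H$ denotes the set of honest processes. A protocol tolerates $f$ faults if its required properties hold against every $f$-adversary. Message complexity = number of messages sent by honest processes; signature complexity = number of signatures contained in messages sent by honest processes, counted with multiplicity (each nested signature and each repetition counts). Marker Problem ($K$ rounds of $T$ steps). Time is divided into $K$ consecutive rounds of $T$ steps. At the end of each round every honest process decides either "unmarked" or "marked, with previous marked process $d$" where $d\in[N]\cup\{\perp\}$. The marked process $M$ of round $1$ is $P_1$ if $P_1\in\mathcal H$ and $\perp$ otherwise; the marked process of round $i+1$ is the honest process that decided "marked" at the end of round $i$, or $\perp$ if there is none. At the beginning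 of round $i$, if $M\neq\perp$, $M$ receives an input $I_i\in[N]$ ("send the marker to $P_{I_i}$"). Required at the end of every round $i$: (consistency) at most one honest process decides it is marked; (liveness) if $M\in\mathcal H$, $I_i=n$ and $P_n\in\mathcal H$, then $P_n$ decides it is marked with previous marked process $M$; (non-impersonation) if $M=\perp$ and an honest process decides it is marked with previous marked process $d$, then $d\notin\mathcal H$. The message/signature complexity per round counts messages/signatures sent by honest processes during one round. *)

theory Defs
  imports Main
begin

text \<open>Processes are numbered 1..N. Message contents form a free term algebra:
  numbers, pairs, and signed strings.  MSig j m is the string m signed by P_j.\<close>

datatype msg = MNum nat | MPair msg msg | MSig nat msg

fun subterms :: "msg \<Rightarrow> msg set" where
  "subterms (MNum n) = {MNum n}"
| "subterms (MPair a b) = insert (MPair a b) (subterms a \<union> subterms b)"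
| "subterms (MSig j m) = insert (MSig j m) (subterms m)"

fun nsigs :: "msg \<Rightarrow> nat" where
  "nsigs (MNum n) = 0"
| "nsigs (MPair a b) = nsigs a + nsigs b"
| "nsigs (MSig j m) = Suc (nsigs m)"

text \<open>Decision at the end of a round: unmarked, or marked with the previous
  marked process (None = \<bottom>).\<close>
datatype decision = Unmarked | Marked "nat option"

text \<open>A trace: tr t i j = list of messages sent by P_i to P_j at step t.\<close>
type_synonym trace = "nat \<Rightarrow> nat \<Rightarrow> nat \<Rightarrow> msg list"

text \<open>Local view of a process: messages received (sending time, sender) and
  inputs received (round number).\<close>
type_synonym view = "(nat \<Rightarrow> nat \<Rightarrow> msg list) \<times> (nat \<Rightarrow> nat option)"

text \<open>A deterministic protocol: a sending function (process, step, view, receiver)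
  and a decision function (process, round, view).\<close>
type_synonym protocol =
  "(nat \<Rightarrow> nat \<Rightarrow> view \<Rightarrow> nat \<Rightarrow> msg list) \<times> (nat \<Rightarrow> nat \<Rightarrow> view \<Rightarrow> decision)"

text \<open>View of P_i consisting of all messages sent to it at steps before t
  (i.e. received up to step t) and all inputs of rounds up to ro.\<close>
definition view_of :: "nat \<Rightarrow> trace \<Rightarrow> (nat \<Rightarrow> nat \<Rightarrow> nat option) \<Rightarrow> nat \<Rightarrow> nat \<Rightarrow> nat \<Rightarrow> view" where
  "view_of N tr inp i t ro =
     ((\<lambda>s k. if s < t \<and> k \<in> {1..N} then tr s k i else []),
      (\<lambda>r. if r \<le> ro then inp r i else None))"

definition inputs :: "(nat \<Rightarrow> nat option) \<Rightarrow> (nat \<Rightarrow> nat) \<Rightarrow> nat \<Rightarrow> nat \<Rightarrow> nat option" where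
  "inputs mk I r i = (if mk r = Some i then Some (I r) else None)"

definition is_marked :: "decision \<Rightarrow> bool" where
  "is_marked d \<longleftrightarrow> d \<noteq> Unmarked"

text \<open>Decision of P_i at the end of round r (r \<ge> 1); round r consists of the
  steps (r-1)*T .. r*T-1, and the decision is based on everything received in it.\<close>
definition dec_of :: "nat \<Rightarrow> nat \<Rightarrow> protocol \<Rightarrow> (nat \<Rightarrow> nat) \<Rightarrow> trace \<Rightarrow> (nat \<Rightarrow> nat option)
                      \<Rightarrow> nat \<Rightarrow> nat \<Rightarrow> decision" where
  "dec_of N T P I tr mk i r = snd P i r (view_of N tr (inputs mk I) i (r * T) r)"

text \<open>Signature rule for corrupted processes: a signature of an honest process in a
  message sent at step t must have been copied from a message received by some
  corrupted process (i.e. sent to it at a step < t).\<close>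
definition adv_sig_ok :: "nat \<Rightarrow> nat set \<Rightarrow> trace \<Rightarrow> bool" where
  "adv_sig_ok N C tr \<longleftrightarrow>
    (\<forall>c\<in>C. \<forall>t j m j' x. m \<in> set (tr t c j) \<and> MSig j' x \<in> subterms m \<and> j' \<in> {1..N} - C \<longrightarrow>
       (\<exists>s<t. \<exists>k\<in>{1..N}. \<exists>c'\<in>C. \<exists>m'\<in>set (tr s k c'). MSig j' x \<in> subterms m'))"

text \<open>A (K rounds of T steps) execution of protocol P with corrupted set C, input
  sequence I, trace tr and marked-process function mk (mk r = marked process of round r).\<close>
definition execution :: "nat \<Rightarrow> nat \<Rightarrow> nat \<Rightarrow> protocol \<Rightarrow> nat set \<Rightarrow> (nat \<Rightarrow> nat)
                         \<Rightarrow> trace \<Rightarrow> (nat \<Rightarrow> nat option) \<Rightarrow> bool" where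
  "execution N K T P C I tr mk \<longleftrightarrow>
     (\<forall>i\<in>{1..N} - C. \<forall>t < K * T. \<forall>j.
        tr t i j = fst P i t (view_of N tr (inputs mk I) i t (t div T + 1)) j)
   \<and> mk 1 = (if 1 \<in> C then None else Some 1)
   \<and> (\<forall>r\<ge>1. mk (r + 1) =
        (if \<exists>!i. i \<in> {1..N} - C \<and> is_marked (dec_of N T P I tr mk i r)
         then Some (THE i. i \<in> {1..N} - C \<and> is_marked (dec_of N T P I tr mk i r))
         else None))
   \<and> adv_sig_ok N C tr"

definition honest_sig_ok :: "nat \<Rightarrow> nat \<Rightarrow> nat \<Rightarrow> nat set \<Rightarrow> trace \<Rightarrow> bool" where
  "honest_sig_ok N K T C tr \<longleftrightarrow>
    (\<forall>i\<in>{1..N} - C. \<forall>t<K * T. \<forall>j\<in>{1..N}. \<forall>m\<in>set (tr t i j). \<forall>j' x.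
       MSig j' x \<in> subterms m \<and> j' \<noteq> i \<longrightarrow>
       (\<exists>s<t. \<exists>k\<in>{1..N}. \<exists>m'\<in>set (tr s k i). MSig j' x \<in> subterms m'))"

definition msgs_in_round :: "nat \<Rightarrow> nat \<Rightarrow> nat set \<Rightarrow> trace \<Rightarrow> nat \<Rightarrow> nat" where
  "msgs_in_round N T C tr r =
     (\<Sum>t\<in>{(r - 1) * T..<r * T}. \<Sum>i\<in>{1..N} - C. \<Sum>j\<in>{1..N}. length (tr t i j))"

definition sigs_in_round :: "nat \<Rightarrow> nat \<Rightarrow> nat set \<Rightarrow> trace \<Rightarrow> nat \<Rightarrow> nat" where
  "sigs_in_round N T C tr r =
     (\<Sum>t\<in>{(r - 1) * T..<r * T}. \<Sum>i\<in>{1..N} - C. \<Sum>j\<in>{1..N}. sum_list (map nsigs (tr t i j)))"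

definition round_ok :: "nat \<Rightarrow> nat \<Rightarrow> protocol \<Rightarrow> nat set \<Rightarrow> (nat \<Rightarrow> nat) \<Rightarrow> trace
                        \<Rightarrow> (nat \<Rightarrow> nat option) \<Rightarrow> nat \<Rightarrow> bool" where
  "round_ok N T P C I tr mk r \<longleftrightarrow>
     card {i \<in> {1..N} - C. is_marked (dec_of N T P I tr mk i r)} \<le> 1
   \<and> (\<forall>m n. mk r = Some m \<and> m \<in> {1..N} - C \<and> I r = n \<and> n \<in> {1..N} - C \<longrightarrow>
        dec_of N T P I tr mk n r = Marked (Some m))
   \<and> (\<forall>i d. mk r = None \<and> i \<in> {1..N} - C \<and> dec_of N T P I tr mk i r = Marked d \<longrightarrow>
        d \<notin> Some ` ({1..N} - C))"

text \<open>P solves the K-round Marker Problem with rounds of T steps tolerating f faults,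
  with at most M messages and S signatures sent by honest processes per round.\<close>
definition marker_solution :: "nat \<Rightarrow> nat \<Rightarrow> nat \<Rightarrow> nat \<Rightarrow> protocol \<Rightarrow> nat \<Rightarrow> nat \<Rightarrow> bool" where
  "marker_solution N f K T P M S \<longleftrightarrow>
    (\<forall>C I tr mk. C \<subseteq> {1..N} \<and> card C \<le> f \<and> (\<forall>r. I r \<in> {1..N})
        \<and> execution N K T P C I tr mk \<longrightarrow>
       honest_sig_ok N K T C tr
       \<and> (\<forall>r\<in>{1..K}. round_ok N T P C I tr mk r
            \<and> msgs_in_round N T C tr r \<le> M \<and> sigs_in_round N T C tr r \<le> S))"

end

(*
  In every round the marked process signs its input and a Dolev-Strong style relay of
  signature chains distributes it among the processes that believe it is marked.  Two
  restrictions keep the relay cheap: a process relays at most two values per round, and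
  only the committee P_1, ..., P_(f+1), which contains an honest process, sends to
  everybody, while the others send to the committee only.  A value accepted by an honest
  process then reaches every honest process through an honest committee member within two
  steps, unless that process has already seen two values; a value accepted only at the
  last step carries f + 1 distinct signatures, one of them honest, and so was accepted
  early by an honest process.  Hence the honest processes agree on whether exactly one
  value was accepted and on which one: that process decides it is marked and everybody
  believes it is the next marked process.  Unforgeability of honest signatures gives
  liveness and non-impersonation.  Each honest process sends f + 1 messages plus at most
  two relays to at most N receivers per round, which gives O(N(f+1)) messages of at most
  f + 3 signatures each.
*)

theory Submission
  imports Defs
begin

section \<open>Signature chains\<close>

fun proposal :: "msg \<Rightarrow> (nat \<times> nat) option" where
  "proposal (MPair (MNum r) (MNum v)) = Some (r, v)"
| "proposal _ = None"

definition signed_proposal :: "nat \<Rightarrow> nat \<Rightarrow> nat \<Rightarrow> msg" where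
  "signed_proposal x r v = MSig x (MPair (MNum r) (MNum v))"

text \<open>\<^term>\<open>chain_info c = Some (ss, x, r, v)\<close> means that \<open>c\<close> is the proposal of value \<open>v\<close>
  for round \<open>r\<close> signed by \<open>x\<close> and then countersigned by the processes of \<open>ss\<close>,
  the outermost (last) signer first.\<close>
fun chain_info :: "msg \<Rightarrow> (nat list \<times> nat \<times> nat \<times> nat) option" where
  "chain_info (MSig s m) = (case proposal m of
      Some (r, v) \<Rightarrow> Some ([], s, r, v)
    | None \<Rightarrow> map_option (\<lambda>(ss, x, r, v). (s # ss, x, r, v)) (chain_info m))"
| "chain_info _ = None"

lemma chain_info_signed_proposal [simp]: "chain_info (signed_proposal x r v) = Some ([], x, r, v)"
  by (simp add: signed_proposal_def)

lemma chain_info_MSig: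
  assumes "chain_info c = Some (ss, x, r, v)"
  shows "chain_info (MSig s c) = Some (s # ss, x, r, v)"
  using assms by (cases c) auto

lemma nsigs_chain: "chain_info c = Some (ss, x, r, v) \<Longrightarrow> nsigs c = Suc (length ss)"
proof (induction c arbitrary: ss)
  case (MSig s m)
  then show ?case
    by (cases m rule: proposal.cases) auto
qed auto

lemma signed_proposal_in_chain:
  "chain_info c = Some (ss, x, r, v) \<Longrightarrow> signed_proposal x r v \<in> subterms c"
proof (induction c arbitrary: ss)
  case (MSig s m)
  then show ?case
    by (cases m rule: proposal.cases) (auto simp: signed_proposal_def)
qed auto

lemma subchain_of_signer:
  "chain_info c = Some (a @ s # b, x, r, v) \<Longrightarrow>
     \<exists>c'. MSig s c' \<in> subterms c \<and> chain_info c' = Some (b, x, r, v)"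
proof (induction c arbitrary: a)
  case (MSig s0 m)
  show ?case
  proof (cases "proposal m")
    case None
    then obtain ss where m: "chain_info m = Some (ss, x, r, v)" "a @ s # b = s0 # ss"
      using MSig.prems by auto
    show ?thesis
    proof (cases a)
      case Nil
      then show ?thesis using m by auto
    next
      case (Cons a0 a')
      then have "chain_info m = Some (a' @ s # b, x, r, v)" using m by auto
      from MSig.IH[OF this] show ?thesis by auto
    qed
  next
    case (Some z)
    then show ?thesis using MSig.prems by (cases m rule: proposal.cases) auto
  qed
qed auto

section \<open>Relaying at most two values\<close>

text \<open>A process receives the list \<^term>\<open>vs j\<close> of values at step \<open>j\<close>. It relays each value
  the first time it sees it, but only until two values have been relayed in total: two
  values already prove that the sender of the round is faulty.\<close>

fun accepted :: "(nat \<Rightarrow> 'a list) \<Rightarrow> nat \<Rightarrow> 'a set" where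
  "accepted vs 0 = {}"
| "accepted vs (Suc j) = accepted vs j \<union> set (vs j)"

definition fresh :: "(nat \<Rightarrow> 'a list) \<Rightarrow> nat \<Rightarrow> 'a list" where
  "fresh vs j = remdups (filter (\<lambda>v. v \<notin> accepted vs j) (vs j))"

definition relayed :: "(nat \<Rightarrow> 'a list) \<Rightarrow> nat \<Rightarrow> 'a list" where
  "relayed vs j = take (2 - card (accepted vs j)) (fresh vs j)"

definition relayed_set :: "(nat \<Rightarrow> 'a list) \<Rightarrow> nat \<Rightarrow> 'a set" where
  "relayed_set vs j = (\<Union>i<j. set (relayed vs i))"

lemma finite_accepted [simp]: "finite (accepted vs j)"
  by (induction j) auto

lemma accepted_mono: "i \<le> j \<Longrightarrow> accepted vs i \<subseteq> accepted vs j"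
  by (induction j) (auto simp: le_Suc_eq)

lemma mem_accepted_iff: "v \<in> accepted vs j \<longleftrightarrow> (\<exists>i<j. v \<in> set (vs i))"
  by (induction j) (auto simp: less_Suc_eq)

lemma accepted_cong: "(\<And>i. i < j \<Longrightarrow> vs1 i = vs2 i) \<Longrightarrow> accepted vs1 j = accepted vs2 j"
  by (induction j) auto

lemma relayed_cong: "(\<And>i. i \<le> j \<Longrightarrow> vs1 i = vs2 i) \<Longrightarrow> relayed vs1 j = relayed vs2 j"
  using accepted_cong[of j vs1 vs2] by (simp add: relayed_def fresh_def)

lemma set_relayed: "set (relayed vs j) \<subseteq> set (vs j) - accepted vs j"
  unfolding relayed_def fresh_def by (auto dest: in_set_takeD)

lemma distinct_relayed: "distinct (relayed vs j)"
  unfolding relayed_def fresh_def by auto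

lemma relayed_set_Suc: "relayed_set vs (Suc j) = relayed_set vs j \<union> set (relayed vs j)"
  unfolding relayed_set_def by (auto simp: lessThan_Suc)

lemma finite_relayed_set [simp]: "finite (relayed_set vs j)"
  unfolding relayed_set_def by auto

lemma relayed_set_subset: "relayed_set vs j \<subseteq> accepted vs j"
proof (induction j)
  case (Suc j)
  then show ?case using set_relayed[of vs j] by (auto simp: relayed_set_Suc)
qed (simp add: relayed_set_def)

lemma card_relayed_set: "card (relayed_set vs j) = min 2 (card (accepted vs j))"
proof (induction j)
  case 0
  then show ?case by (simp add: relayed_set_def)
next
  case (Suc j)
  let ?A = "accepted vs j" and ?n = "fresh vs j"
  have "accepted vs (Suc j) = ?A \<union> set ?n" "?A \<inter> set ?n = {}"
    by (auto simp: fresh_def)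
  moreover have "distinct ?n" by (simp add: fresh_def)
  ultimately have card_A: "card (accepted vs (Suc j)) = card ?A + length ?n"
    by (simp add: card_Un_disjoint distinct_card)
  have "relayed_set vs j \<inter> set (relayed vs j) = {}"
    using relayed_set_subset[of vs j] set_relayed[of vs j] by blast
  then have "card (relayed_set vs (Suc j)) = card (relayed_set vs j) + length (relayed vs j)"
    by (simp add: relayed_set_Suc card_Un_disjoint distinct_card distinct_relayed)
  also have "\<dots> = min 2 (card ?A) + min (2 - card ?A) (length ?n)"
    using Suc.IH by (simp add: relayed_def)
  also have "\<dots> = min 2 (card (accepted vs (Suc j)))"
    unfolding card_A by linarith
  finally show ?case .
qed

lemma sum_length_relayed: "(\<Sum>i<j. length (relayed vs i)) = card (relayed_set vs j)"
proof (induction j)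
  case (Suc j)
  have "relayed_set vs j \<inter> set (relayed vs j) = {}"
    using relayed_set_subset[of vs j] set_relayed[of vs j] by blast
  then show ?case
    using Suc.IH by (simp add: relayed_set_Suc card_Un_disjoint distinct_card distinct_relayed)
qed (simp add: relayed_set_def)

lemma sum_length_relayed_le: "(\<Sum>i<j. length (relayed vs i)) \<le> 2"
  by (simp add: sum_length_relayed card_relayed_set)

lemma accepted_relayed_or_two:
  assumes "v \<in> accepted vs j"
  shows "v \<in> relayed_set vs j \<or> 2 \<le> card (relayed_set vs j)"
proof (cases "card (accepted vs j) \<le> 1")
  case True
  then have "relayed_set vs j = accepted vs j"
    using card_relayed_set[of vs j] relayed_set_subset[of vs j] by (simp add: card_subset_eq)
  then show ?thesis using assms by simp
next
  case False
  then show ?thesis by (simp add: card_relayed_set)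
qed

lemma two_le_card_iff: "finite S \<Longrightarrow> 2 \<le> card S \<longleftrightarrow> (\<exists>u\<in>S. \<exists>w\<in>S. u \<noteq> w)"
  using card_le_Suc0_iff_eq[of S] by (auto simp: not_less_eq_eq[symmetric])

definition committee :: "nat \<Rightarrow> nat \<Rightarrow> bool" where
  "committee f j \<longleftrightarrow> 1 \<le> j \<and> j \<le> Suc f"

definition chain_value :: "msg \<Rightarrow> nat" where
  "chain_value c = (case chain_info c of Some (ss, x, r, v) \<Rightarrow> v | None \<Rightarrow> 0)"

definition valid_chain :: "nat \<Rightarrow> nat \<Rightarrow> nat \<Rightarrow> nat \<Rightarrow> nat \<Rightarrow> msg \<Rightarrow> bool" where
  "valid_chain N p x r j c \<longleftrightarrow> (\<exists>ss v. chain_info c = Some (ss, x, r, v) \<and> length ss = j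
      \<and> distinct ss \<and> set ss \<subseteq> {1..N} \<and> p \<notin> set ss)"

definition received_at :: "nat \<Rightarrow> (nat \<Rightarrow> nat \<Rightarrow> msg list) \<Rightarrow> nat \<Rightarrow> msg list" where
  "received_at N rc s = concat (map (rc s) [1..<Suc N])"

definition chain_values ::
  "nat \<Rightarrow> nat \<Rightarrow> (nat \<Rightarrow> nat \<Rightarrow> msg list) \<Rightarrow> nat \<Rightarrow> nat \<Rightarrow> nat \<Rightarrow> nat \<Rightarrow> nat list" where
  "chain_values N T rc p x r j =
     map chain_value (filter (valid_chain N p x r j) (received_at N rc ((r - 1) * T + j)))"

text \<open>\<^term>\<open>hd []\<close> is unspecified; the witness is only used for values that occur in
  \<^term>\<open>chain_values N T rc p x r j\<close>.\<close>
definition chain_witness ::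
  "nat \<Rightarrow> nat \<Rightarrow> (nat \<Rightarrow> nat \<Rightarrow> msg list) \<Rightarrow> nat \<Rightarrow> nat \<Rightarrow> nat \<Rightarrow> nat \<Rightarrow> nat \<Rightarrow> msg" where
  "chain_witness N T rc p x r j v =
     hd (filter (\<lambda>c. valid_chain N p x r j c \<and> chain_value c = v) (received_at N rc ((r - 1) * T + j)))"

text \<open>\<^term>\<open>belief N T rc p r\<close> is what \<open>p\<close> believes after \<open>r\<close> rounds about the marked process
  of round \<open>r + 1\<close>: the unique value accepted in round \<open>r\<close> from chains rooted at the
  previously believed process, and \<open>None\<close> if there is no such value.\<close>
fun belief :: "nat \<Rightarrow> nat \<Rightarrow> (nat \<Rightarrow> nat \<Rightarrow> msg list) \<Rightarrow> nat \<Rightarrow> nat \<Rightarrow> nat option" where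
  "belief N T rc p 0 = Some 1"
| "belief N T rc p (Suc r) = (case belief N T rc p r of
      None \<Rightarrow> None
    | Some x \<Rightarrow> (if card (accepted (chain_values N T rc p x (Suc r)) T) = 1
                 then Some (the_elem (accepted (chain_values N T rc p x (Suc r)) T)) else None))"

text \<open>At its first step the marked process sends its signed
  input to the committee \<open>P\<^sub>1, \<dots>, P\<^sub>f\<^sub>+\<^sub>1\<close>. At step \<open>k \<ge> 1\<close> a process countersigns
  and relays the chains of length \<open>k - 1\<close> it received at step \<open>k - 1\<close>, for the values
  it is allowed to relay; committee members send to everybody, the others only to the
  committee.\<close>
definition marker_send :: "nat \<Rightarrow> nat \<Rightarrow> nat \<Rightarrow> nat \<Rightarrow> view \<Rightarrow> nat \<Rightarrow> msg list" where
  "marker_send N f i t V j = (let T = f + 3; r = t div T + 1; k = t mod T in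
    if k = 0 then
      (case snd V r of Some n \<Rightarrow> if committee f j then [signed_proposal i r n] else [] | None \<Rightarrow> [])
    else (case belief N T (fst V) i (r - 1) of
      None \<Rightarrow> []
    | Some x \<Rightarrow> if committee f i \<or> committee f j
        then map (\<lambda>v. MSig i (chain_witness N T (fst V) i x r (k - 1) v))
               (relayed (chain_values N T (fst V) i x r) (k - 1))
        else []))"

definition marker_decide :: "nat \<Rightarrow> nat \<Rightarrow> nat \<Rightarrow> nat \<Rightarrow> view \<Rightarrow> decision" where
  "marker_decide N f i r V = (let T = f + 3 in case belief N T (fst V) i (r - 1) of
      None \<Rightarrow> Unmarked
    | Some x \<Rightarrow> if accepted (chain_values N T (fst V) i x r) T = {i} then Marked (Some x)
                else Unmarked)"

abbreviation marker_protocol :: "nat \<Rightarrow> nat \<Rightarrow> protocol" where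
  "marker_protocol N f \<equiv> (marker_send N f, marker_decide N f)"

lemma chain_values_cong:
  "\<forall>s<b. rc1 s = rc2 s \<Longrightarrow> (r - 1) * T + j < b \<Longrightarrow>
     chain_values N T rc1 p x r j = chain_values N T rc2 p x r j"
  by (simp add: chain_values_def received_at_def)

lemma chain_witness_cong:
  "\<forall>s<b. rc1 s = rc2 s \<Longrightarrow> (r - 1) * T + j < b \<Longrightarrow>
     chain_witness N T rc1 p x r j v = chain_witness N T rc2 p x r j v"
  by (simp add: chain_witness_def received_at_def)

lemma accepted_chain_values_cong:
  assumes "\<forall>s<b. rc1 s = rc2 s" and "(r - 1) * T + j \<le> b"
  shows "accepted (chain_values N T rc1 p x r) j = accepted (chain_values N T rc2 p x r) j"
  by (rule accepted_cong, rule chain_values_cong) (use assms in auto)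

lemma belief_cong:
  "\<forall>s<b. rc1 s = rc2 s \<Longrightarrow> r * T \<le> b \<Longrightarrow> belief N T rc1 p r = belief N T rc2 p r"
proof (induction r)
  case (Suc r)
  then have "belief N T rc1 p r = belief N T rc2 p r" by simp
  moreover have "accepted (chain_values N T rc1 p x (Suc r)) T
      = accepted (chain_values N T rc2 p x (Suc r)) T" for x
    by (rule accepted_chain_values_cong) (use Suc.prems in auto)
  ultimately show ?case by (simp split: option.split)
qed simp

lemma marker_send_cong:
  assumes hist: "\<forall>s<t. fst V1 s = fst V2 s" and inp: "snd V1 = snd V2"
  shows "marker_send N f i t V1 j = marker_send N f i t V2 j"
proof -
  let ?T = "f + 3"
  let ?r = "t div ?T + 1" and ?k = "t mod ?T"
  have t: "t = (?r - 1) * ?T + ?k" by (simp add: div_mult_mod_eq)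
  have "belief N ?T (fst V1) i (?r - 1) = belief N ?T (fst V2) i (?r - 1)"
    by (rule belief_cong[OF hist]) (metis le_add1 t)
  moreover have "relayed (chain_values N ?T (fst V1) i x ?r) (?k - 1)
      = relayed (chain_values N ?T (fst V2) i x ?r) (?k - 1)" if "?k \<noteq> 0" for x
    by (rule relayed_cong, rule chain_values_cong[OF hist]) (use that t in linarith)
  moreover have "chain_witness N ?T (fst V1) i x ?r (?k - 1) v
      = chain_witness N ?T (fst V2) i x ?r (?k - 1) v" if "?k \<noteq> 0" for x v
    by (rule chain_witness_cong[OF hist]) (use that t in linarith)
  ultimately show ?thesis
    using inp unfolding marker_send_def Let_def by (auto split: option.splits)
qed

lemma marker_decide_cong:
  assumes "\<forall>s < r * (f + 3). fst V1 s = fst V2 s" and "1 \<le> r"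
  shows "marker_decide N f i r V1 = marker_decide N f i r V2"
proof -
  have "belief N (f + 3) (fst V1) i (r - 1) = belief N (f + 3) (fst V2) i (r - 1)"
    by (rule belief_cong[OF assms(1)]) (simp add: mult_le_mono1)
  moreover have "accepted (chain_values N (f + 3) (fst V1) i x r) (f + 3)
      = accepted (chain_values N (f + 3) (fst V2) i x r) (f + 3)" for x
    by (rule accepted_chain_values_cong[OF assms(1)]) (use assms(2) in \<open>cases r, auto\<close>)
  ultimately show ?thesis unfolding marker_decide_def Let_def by (auto split: option.splits)
qed

locale marker_execution =
  fixes N f K :: nat and C :: "nat set" and I :: "nat \<Rightarrow> nat" and tr :: trace
    and mk :: "nat \<Rightarrow> nat option"
  assumes f_less_N: "f < N" and C_subset: "C \<subseteq> {1..N}" and card_C: "card C \<le> f"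
    and execution: "execution N K (f + 3) (marker_protocol N f) C I tr mk"
begin

abbreviation "T \<equiv> f + 3"
abbreviation "H \<equiv> {1..N} - C"
abbreviation "dec p r \<equiv> dec_of N T (marker_protocol N f) I tr mk p r"

definition inbox :: "nat \<Rightarrow> nat \<Rightarrow> nat \<Rightarrow> msg list" where
  "inbox p s k = (if k \<in> {1..N} then tr s k p else [])"

definition bel :: "nat \<Rightarrow> nat \<Rightarrow> nat option" where
  "bel p r = belief N T (inbox p) p (r - 1)"

definition acc :: "nat \<Rightarrow> nat \<Rightarrow> nat \<Rightarrow> nat \<Rightarrow> nat set" where
  "acc p x r = accepted (chain_values N T (inbox p) p x r)"

definition relay :: "nat \<Rightarrow> nat \<Rightarrow> nat \<Rightarrow> nat \<Rightarrow> nat list" where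
  "relay p x r = relayed (chain_values N T (inbox p) p x r)"

definition witness :: "nat \<Rightarrow> nat \<Rightarrow> nat \<Rightarrow> nat \<Rightarrow> nat \<Rightarrow> msg" where
  "witness p x r j v = chain_witness N T (inbox p) p x r j v"

lemma finite_C: "finite C"
  using C_subset finite_subset by blast

lemma mk_1: "mk 1 = (if 1 \<in> C then None else Some 1)"
  using execution unfolding execution_def by auto

lemma mk_Suc: "1 \<le> r \<Longrightarrow> mk (r + 1) =
    (if \<exists>!i. i \<in> H \<and> is_marked (dec i r) then Some (THE i. i \<in> H \<and> is_marked (dec i r)) else None)"
  using execution unfolding execution_def by blast

lemma honest_send:
  assumes "p \<in> H" "t < K * T"
  shows "tr t p j = (let r = t div T + 1; k = t mod T in
     if k = 0 then (if mk r = Some p \<and> committee f j then [signed_proposal p r (I r)] else [])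
     else (case bel p r of
       None \<Rightarrow> []
     | Some x \<Rightarrow> if committee f p \<or> committee f j
         then map (\<lambda>v. MSig p (witness p x r (k - 1) v)) (relay p x r (k - 1)) else []))"
proof -
  let ?V = "view_of N tr (inputs mk I) p t (t div T + 1)"
  have "tr t p j = marker_send N f p t ?V j"
    using execution assms unfolding execution_def by auto
  also have "\<dots> = marker_send N f p t (inbox p, snd ?V) j"
    by (rule marker_send_cong) (auto simp: view_of_def inbox_def)
  finally show ?thesis
    by (simp add: marker_send_def view_of_def inputs_def bel_def relay_def witness_def Let_def
        split: option.splits)
qed

lemma honest_decision:
  assumes "1 \<le> r"
  shows "dec p r =
    (case bel p r of None \<Rightarrow> Unmarked | Some x \<Rightarrow> if acc p x r T = {p} then Marked (Some x) else Unmarked)"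
proof -
  let ?V = "view_of N tr (inputs mk I) p (r * T) r"
  have "dec p r = marker_decide N f p r (inbox p, snd ?V)"
    unfolding dec_of_def snd_conv
    by (rule marker_decide_cong) (use assms in \<open>auto simp: view_of_def inbox_def\<close>)
  also have "\<dots> =
    (case bel p r of None \<Rightarrow> Unmarked | Some x \<Rightarrow> if acc p x r T = {p} then Marked (Some x) else Unmarked)"
    unfolding marker_decide_def bel_def acc_def Let_def fst_conv by (rule refl)
  finally show ?thesis .
qed

lemma mem_received_at: "c \<in> set (received_at N (inbox p) s) \<longleftrightarrow> (\<exists>k\<in>{1..N}. c \<in> set (tr s k p))"
  by (auto simp: received_at_def inbox_def)

lemma mem_chain_values:
  "v \<in> set (chain_values N T (inbox p) p x r j) \<longleftrightarrow>
     (\<exists>k\<in>{1..N}. \<exists>c \<in> set (tr ((r - 1) * T + j) k p). valid_chain N p x r j c \<and> chain_value c = v)"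
  by (auto simp: chain_values_def mem_received_at)

lemma valid_chain_info:
  "valid_chain N p x r j c \<Longrightarrow> \<exists>ss. chain_info c = Some (ss, x, r, chain_value c) \<and> length ss = j
    \<and> distinct ss \<and> set ss \<subseteq> {1..N} \<and> p \<notin> set ss"
  by (auto simp: valid_chain_def chain_value_def)

lemma valid_chain_not_proposal: "valid_chain N p x r j c \<Longrightarrow> MSig q c \<noteq> signed_proposal a b d"
  by (auto simp: valid_chain_def signed_proposal_def)

lemma relay_chain_values: "v \<in> set (relay p x r j) \<Longrightarrow> v \<in> set (chain_values N T (inbox p) p x r j)"
  using set_relayed[of "chain_values N T (inbox p) p x r" j] unfolding relay_def by blast

lemma witness_received:
  assumes "v \<in> set (relay p x r j)"
  shows "\<exists>k\<in>{1..N}. witness p x r j v \<in> set (tr ((r - 1) * T + j) k p)"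
    and "valid_chain N p x r j (witness p x r j v)" and "chain_value (witness p x r j v) = v"
proof -
  let ?L = "filter (\<lambda>c. valid_chain N p x r j c \<and> chain_value c = v)
              (received_at N (inbox p) ((r - 1) * T + j))"
  have "?L \<noteq> []"
    using relay_chain_values[OF assms] by (auto simp: chain_values_def filter_empty_conv)
  then have "hd ?L \<in> set ?L" by (rule hd_in_set)
  then show "\<exists>k\<in>{1..N}. witness p x r j v \<in> set (tr ((r - 1) * T + j) k p)"
    and "valid_chain N p x r j (witness p x r j v)" and "chain_value (witness p x r j v) = v"
    by (auto simp: witness_def chain_witness_def mem_received_at)
qed

lemma acc_Suc: "acc p x r (Suc j) = acc p x r j \<union> set (chain_values N T (inbox p) p x r j)"
  by (simp add: acc_def)

lemma acc_mono: "i \<le> j \<Longrightarrow> acc p x r i \<subseteq> acc p x r j"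
  unfolding acc_def by (rule accepted_mono)

lemma finite_acc [simp]: "finite (acc p x r j)"
  by (simp add: acc_def)

lemma mem_acc_iff: "v \<in> acc p x r j \<longleftrightarrow> (\<exists>i<j. v \<in> set (chain_values N T (inbox p) p x r i))"
  unfolding acc_def by (rule mem_accepted_iff)

lemma honest_message_cases:
  assumes "p \<in> H" "t < K * T" "m \<in> set (tr t p j)"
  shows "(t mod T = 0 \<and> mk (t div T + 1) = Some p \<and> m = signed_proposal p (t div T + 1) (I (t div T + 1)))
   \<or> (t mod T \<noteq> 0 \<and> (\<exists>x v. bel p (t div T + 1) = Some x \<and> v \<in> set (relay p x (t div T + 1) (t mod T - 1))
          \<and> m = MSig p (witness p x (t div T + 1) (t mod T - 1) v)))"
  using assms(3) honest_send[OF assms(1,2), of j]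
  by (auto simp: Let_def split: option.splits if_splits)

lemma honest_message_origin:
  assumes "p \<in> H" "t < K * T" "m \<in> set (tr t p j)"
  shows "(\<exists>r n. m = signed_proposal p r n)
    \<or> (\<exists>c. m = MSig p c \<and> 1 \<le> t \<and> (\<exists>k\<in>{1..N}. c \<in> set (tr (t - 1) k p)))"
  using honest_message_cases[OF assms]
proof (elim disjE exE conjE)
  fix x v
  assume k: "t mod T \<noteq> 0" and v: "v \<in> set (relay p x (t div T + 1) (t mod T - 1))"
    and m: "m = MSig p (witness p x (t div T + 1) (t mod T - 1) v)"
  have "t div T * T + t mod T = t" by (rule div_mult_mod_eq)
  then have "(t div T + 1 - 1) * T + (t mod T - 1) = t - 1" "1 \<le> t" using k by auto
  then show ?thesis using witness_received(1)[OF v] m by auto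
qed auto

lemma honest_sig_ok: "honest_sig_ok N K T C tr"
  unfolding honest_sig_ok_def
proof (intro ballI allI impI)
  fix i t j m j' y
  assume i: "i \<in> H" and t: "t < K * T" and m: "m \<in> set (tr t i j)"
    and h: "MSig j' y \<in> subterms m \<and> j' \<noteq> i"
  show "\<exists>s<t. \<exists>k\<in>{1..N}. \<exists>m'\<in>set (tr s k i). MSig j' y \<in> subterms m'"
    using honest_message_origin[OF i t m]
  proof (elim disjE exE conjE bexE)
    fix r n assume "m = signed_proposal i r n"
    then show ?thesis using h by (auto simp: signed_proposal_def)
  next
    fix c k assume "m = MSig i c" "1 \<le> t" "k \<in> {1..N}" "c \<in> set (tr (t - 1) k i)"
    then show ?thesis using h by (intro exI[of _ "t - 1"]) auto
  qed
qed

text \<open>A signature of an honest process only travels by copying: corrupted processes copy it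
  from messages received earlier, honest ones from a chain received at the previous step.\<close>
lemma honest_signature_origin:
  "t < K * T \<Longrightarrow> k \<in> {1..N} \<Longrightarrow> m \<in> set (tr t k q) \<Longrightarrow> x \<in> H \<Longrightarrow> MSig x y \<in> subterms m \<Longrightarrow>
     \<exists>t'\<le>t. \<exists>j. MSig x y \<in> set (tr t' x j)"
proof (induction t arbitrary: k q m rule: less_induct)
  case (less t)
  show ?case
  proof (cases "k \<in> C")
    case True
    then obtain s k' c m' where s: "s < t" "k' \<in> {1..N}" "m' \<in> set (tr s k' c)" "MSig x y \<in> subterms m'"
      using execution less.prems(3-5) unfolding execution_def adv_sig_ok_def by blast
    then obtain t' j where "t' \<le> s" "MSig x y \<in> set (tr t' x j)"
      using less.IH[OF s(1) _ s(2,3) less.prems(4) s(4)] less.prems(1) by auto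
    then show ?thesis using s(1) by (intro exI[of _ t']) auto
  next
    case False
    then have "k \<in> H" using less.prems by auto
    from honest_message_origin[OF this less.prems(1,3)] show ?thesis
    proof (elim disjE exE conjE bexE)
      fix r n assume "m = signed_proposal k r n"
      then show ?thesis using less.prems(3,5) by (auto simp: signed_proposal_def)
    next
      fix c k' assume c: "m = MSig k c" "1 \<le> t" "k' \<in> {1..N}" "c \<in> set (tr (t - 1) k' k)"
      show ?thesis
      proof (cases "MSig x y = m")
        case True
        then show ?thesis using c less.prems(3) by auto
      next
        case False
        then have "MSig x y \<in> subterms c" using less.prems(5) c by auto
        moreover have "t - 1 < K * T" using less.prems(1) by simp
        ultimately obtain t' j where "t' \<le> t - 1" "MSig x y \<in> set (tr t' x j)"
          using less.IH[of "t - 1", OF _ _ c(3,4) less.prems(4)] c(2) by auto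
        then show ?thesis by (intro exI[of _ t']) auto
      qed
    qed
  qed
qed

lemma own_chain_signature:
  assumes "x \<in> H" "t < K * T" "MSig x c \<in> set (tr t x j)" "chain_info c = Some (ss, y, r, v)"
  shows "t mod T \<noteq> 0 \<and> r = t div T + 1 \<and> bel x r = Some y \<and> length ss = t mod T - 1
      \<and> v \<in> acc x y r (t mod T)"
  using honest_message_cases[OF assms(1-3)]
proof (elim disjE exE conjE)
  assume "MSig x c = signed_proposal x (t div T + 1) (I (t div T + 1))"
  then show ?thesis using assms(4) by (simp add: signed_proposal_def)
next
  fix y0 v0
  assume k: "t mod T \<noteq> 0" and b: "bel x (t div T + 1) = Some y0"
    and v0: "v0 \<in> set (relay x y0 (t div T + 1) (t mod T - 1))"
    and m: "MSig x c = MSig x (witness x y0 (t div T + 1) (t mod T - 1) v0)"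
  obtain ss0 where ss0: "chain_info c = Some (ss0, y0, t div T + 1, v0)" "length ss0 = t mod T - 1"
    using valid_chain_info[OF witness_received(2)[OF v0]] witness_received(3)[OF v0] m by auto
  have "v0 \<in> acc x y0 (t div T + 1) (Suc (t mod T - 1))"
    using relay_chain_values[OF v0] by (simp add: acc_Suc)
  then show ?thesis using ss0 assms(4) k b by auto
qed

lemma signed_chain_accepted:
  assumes "t < K * T" "k \<in> {1..N}" "m \<in> set (tr t k q)" "x \<in> H"
    and "MSig x c \<in> subterms m" and "chain_info c = Some (ss, y, r, v)"
  shows "bel x r = Some y \<and> v \<in> acc x y r (Suc (length ss)) \<and> (r - 1) * T + Suc (length ss) \<le> t
     \<and> Suc (length ss) < T"
proof -
  obtain t' j where t': "t' \<le> t" "MSig x c \<in> set (tr t' x j)"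
    using honest_signature_origin[OF assms(1-5)] by blast
  have "t' div T * T + t' mod T = t'" by (rule div_mult_mod_eq)
  moreover have "t' mod T < T" by simp
  ultimately show ?thesis
    using own_chain_signature[OF assms(4) _ t'(2) assms(6)] t' assms(1) by auto
qed

lemma honest_signer_accepted:
  assumes "t < K * T" "k \<in> {1..N}" "c \<in> set (tr t k q)" "s \<in> H"
    and "chain_info c = Some (a @ s # b, x, r, v)"
  shows "v \<in> acc s x r (Suc (length b))"
proof -
  obtain c' where "MSig s c' \<in> subterms c" "chain_info c' = Some (b, x, r, v)"
    using subchain_of_signer[OF assms(5)] by blast
  then show ?thesis using signed_chain_accepted[OF assms(1-4)] by blast
qed

lemma signed_proposal_genuine:
  assumes "t < K * T" "k \<in> {1..N}" "m \<in> set (tr t k q)" "x \<in> H"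
    and "signed_proposal x r v \<in> subterms m"
  shows "mk r = Some x \<and> v = I r"
proof -
  obtain t' j where t': "t' \<le> t" "signed_proposal x r v \<in> set (tr t' x j)"
    using honest_signature_origin[OF assms(1-4), of "MPair (MNum r) (MNum v)"] assms(5)
    by (auto simp: signed_proposal_def)
  have "t' < K * T" using t'(1) assms(1) by simp
  from honest_message_cases[OF assms(4) this t'(2)] show ?thesis
  proof (elim disjE exE conjE)
    fix y v0 assume "v0 \<in> set (relay x y (t' div T + 1) (t' mod T - 1))"
      "signed_proposal x r v = MSig x (witness x y (t' div T + 1) (t' mod T - 1) v0)"
    then show ?thesis using valid_chain_not_proposal witness_received(2) by metis
  qed (auto simp: signed_proposal_def)
qed

lemma step_in_round:
  assumes "1 \<le> r" "r \<le> K" "j < T"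
  shows "(r - 1) * T + j < K * T" and "((r - 1) * T + j) div T + 1 = r" and "((r - 1) * T + j) mod T = j"
proof -
  have "(r - 1) * T + j < r * T" using assms(1,3) by (cases r) auto
  also have "\<dots> \<le> K * T" using assms(2) by simp
  finally show "(r - 1) * T + j < K * T" .
  show "((r - 1) * T + j) div T + 1 = r" "((r - 1) * T + j) mod T = j" using assms by simp_all
qed

lemma honest_committee_member: "\<exists>c\<in>H. committee f c"
proof (rule ccontr)
  assume "\<not> ?thesis"
  then have "{1..Suc f} \<subseteq> C" using f_less_N by (auto simp: committee_def)
  then have "card {1..Suc f} \<le> card C" using finite_C by (rule card_mono[rotated])
  then show False using card_C by simp
qed

lemma honest_in_distinct:
  assumes "distinct ss" "set ss \<subseteq> {1..N}" "f < length ss"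
  shows "\<exists>s\<in>set ss. s \<in> H"
proof (rule ccontr)
  assume "\<not> ?thesis"
  then have "set ss \<subseteq> C" using assms(2) by auto
  then have "card (set ss) \<le> card C" using finite_C by (rule card_mono[rotated])
  then show False using distinct_card[OF assms(1)] assms(3) card_C by simp
qed

end

section \<open>Agreement within a round\<close>

locale marker_round = marker_execution +
  fixes r x :: nat
  assumes round_pos: "1 \<le> r" and round_le_K: "r \<le> K"
    and belief_agreed: "\<forall>p\<in>H. bel p r = Some x"
begin

definition forwarded :: "nat \<Rightarrow> nat \<Rightarrow> nat set" where
  "forwarded p j = relayed_set (chain_values N T (inbox p) p x r) j"

lemma round_step_in_execution: "j < T \<Longrightarrow> (r - 1) * T + j < K * T"
  using step_in_round(1) round_pos round_le_K by blast

lemma round_step_div_mod: "j < T \<Longrightarrow> ((r - 1) * T + j) div T + 1 = r \<and> ((r - 1) * T + j) mod T = j"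
  using step_in_round(2,3) round_pos round_le_K by blast

lemma relay_delivered:
  assumes p: "p \<in> H" and q: "q \<in> H" and cm: "committee f p \<or> committee f q" and j: "Suc j < T"
    and v: "v \<in> set (relay p x r j)"
  shows "v \<in> acc q x r (Suc (Suc j))"
proof -
  let ?t = "(r - 1) * T + Suc j" and ?c = "witness p x r j v"
  have "tr ?t p q = map (\<lambda>v. MSig p (witness p x r j v)) (relay p x r j)"
    using honest_send[OF p round_step_in_execution[OF j], of q] round_step_div_mod[OF j]
      belief_agreed p cm by (simp add: Let_def)
  then have sent: "MSig p ?c \<in> set (tr ?t p q)" using v by simp
  obtain k where k: "k \<in> {1..N}" "?c \<in> set (tr ((r - 1) * T + j) k p)"
    using witness_received(1)[OF v] by blast
  obtain ss where ss: "chain_info ?c = Some (ss, x, r, v)" "length ss = j" "distinct ss"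
      "set ss \<subseteq> {1..N}" "p \<notin> set ss"
    using valid_chain_info[OF witness_received(2)[OF v]] witness_received(3)[OF v] by auto
  consider "q = p" | "q \<in> set ss" | "q \<notin> set (p # ss)" by auto
  then show ?thesis
  proof cases
    case 1
    then show ?thesis
      using relay_chain_values[OF v] acc_mono[of "Suc j" "Suc (Suc j)"] by (auto simp: acc_Suc)
  next
    case 2
    then obtain a b where "ss = a @ q # b" by (meson split_list)
    then have "v \<in> acc q x r (Suc (length b))" "Suc (length b) \<le> Suc (Suc j)"
      using honest_signer_accepted[OF _ k q] round_step_in_execution j ss(1,2) by auto
    then show ?thesis using acc_mono by blast
  next
    case 3
    have "valid_chain N q x r (Suc j) (MSig p ?c)" "chain_value (MSig p ?c) = v"
      using chain_info_MSig[OF ss(1)] ss 3 p by (auto simp: valid_chain_def chain_value_def)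
    then have "v \<in> set (chain_values N T (inbox q) q x r (Suc j))"
      using sent p by (auto simp: mem_chain_values)
    then show ?thesis by (simp add: acc_Suc)
  qed
qed

lemma forwarded_delivered:
  assumes "p \<in> H" "q \<in> H" "committee f p \<or> committee f q" "j < T"
  shows "forwarded p j \<subseteq> acc q x r (Suc j)"
proof
  fix w assume "w \<in> forwarded p j"
  then obtain i where i: "i < j" "w \<in> set (relay p x r i)"
    unfolding forwarded_def relayed_set_def relay_def by blast
  then have "w \<in> acc q x r (Suc (Suc i))"
    using relay_delivered[OF assms(1-3)] assms(4) by simp
  then show "w \<in> acc q x r (Suc j)" using acc_mono i(1) by (meson Suc_leI Suc_mono subsetD)
qed

lemma accepted_forwarded_or_two: "v \<in> acc p x r j \<Longrightarrow> v \<in> forwarded p j \<or> 2 \<le> card (forwarded p j)"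
  unfolding forwarded_def acc_def by (rule accepted_relayed_or_two)

lemma acceptance_spreads_from_committee:
  assumes p: "p \<in> H" "committee f p" and v: "v \<in> acc p x r j" and j: "j < T" and q: "q \<in> H"
  shows "v \<in> acc q x r (Suc j) \<or> 2 \<le> card (acc q x r (Suc j))"
proof -
  have sub: "forwarded p j \<subseteq> acc q x r (Suc j)" using forwarded_delivered[OF p(1) q _ j] p(2) by blast
  then show ?thesis using accepted_forwarded_or_two[OF v] card_mono[OF finite_acc sub] by auto
qed

text \<open>A value accepted by an honest process reaches every honest process within two steps,
  through an honest committee member, unless that process has seen two values.\<close>
lemma acceptance_spreads:
  assumes p: "p \<in> H" and v: "v \<in> acc p x r j" and j: "Suc j < T" and q: "q \<in> H"
  shows "v \<in> acc q x r (Suc (Suc j)) \<or> 2 \<le> card (acc q x r (Suc (Suc j)))"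
proof -
  obtain c where c: "c \<in> H" "committee f c" using honest_committee_member by blast
  have sub: "forwarded p j \<subseteq> acc c x r (Suc j)" using forwarded_delivered[OF p c(1) _] c(2) j by simp
  have step: "\<forall>u\<in>acc c x r (Suc j). u \<in> acc q x r (Suc (Suc j)) \<or> 2 \<le> card (acc q x r (Suc (Suc j)))"
    using acceptance_spreads_from_committee[OF c _ _ q] j by simp
  show ?thesis using accepted_forwarded_or_two[OF v]
  proof
    assume "v \<in> forwarded p j" then show ?thesis using sub step by blast
  next
    assume "2 \<le> card (forwarded p j)"
    then have "2 \<le> card (acc c x r (Suc j))" using card_mono[OF finite_acc sub] by simp
    then show ?thesis using step two_le_card_iff[OF finite_acc] by metis
  qed
qed

definition accepts_or_confused :: "nat \<Rightarrow> nat \<Rightarrow> bool" where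
  "accepts_or_confused q v \<longleftrightarrow> v \<in> acc q x r T \<or> 2 \<le> card (acc q x r T)"

lemma accepts_or_confused_if_early:
  assumes "p \<in> H" "v \<in> acc p x r j" "j + 2 \<le> T" "q \<in> H"
  shows "accepts_or_confused q v"
proof -
  have sub: "acc q x r (Suc (Suc j)) \<subseteq> acc q x r T" using acc_mono assms(3) by simp
  have "v \<in> acc q x r (Suc (Suc j)) \<or> 2 \<le> card (acc q x r (Suc (Suc j)))"
    using acceptance_spreads[OF assms(1,2) _ assms(4)] assms(3) by simp
  then show ?thesis
    unfolding accepts_or_confused_def using sub card_mono[OF finite_acc sub] by auto
qed

text \<open>This is the Dolev-Strong argument: a value accepted late comes with a chain of more
  than \<open>f\<close> distinct signers, and the honest one among the last \<open>f + 1\<close> of them accepted it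
  early enough for it to spread.\<close>
lemma accepts_or_confused_if_accepted:
  assumes p: "p \<in> H" and v: "v \<in> acc p x r T" and q: "q \<in> H"
  shows "accepts_or_confused q v"
proof -
  obtain i where i: "i < T" "v \<in> set (chain_values N T (inbox p) p x r i)"
    using v mem_acc_iff by blast
  show ?thesis
  proof (cases "i + 3 \<le> T")
    case True
    have "v \<in> acc p x r (Suc i)" using i(2) by (simp add: acc_Suc)
    then show ?thesis using accepts_or_confused_if_early[OF p _ _ q] True by simp
  next
    case False
    obtain k c where kc: "k \<in> {1..N}" "c \<in> set (tr ((r - 1) * T + i) k p)" "valid_chain N p x r i c"
        "chain_value c = v"
      using i(2) by (auto simp: mem_chain_values)
    obtain ss where ss: "chain_info c = Some (ss, x, r, v)" "length ss = i" "distinct ss" "set ss \<subseteq> {1..N}"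
      using valid_chain_info[OF kc(3)] kc(4) by auto
    let ?last = "drop (i - Suc f) ss"
    have "distinct ?last" "set ?last \<subseteq> {1..N}" "f < length ?last"
      using ss False set_drop_subset[of _ ss] by auto
    then obtain s where s: "s \<in> set ?last" "s \<in> H" using honest_in_distinct by blast
    then obtain a b where ab: "?last = a @ s # b" by (meson split_list)
    then have "ss = (take (i - Suc f) ss @ a) @ s # b" by (metis append.assoc append_take_drop_id)
    then have "v \<in> acc s x r (Suc (length b))"
      using honest_signer_accepted[OF round_step_in_execution[OF i(1)] kc(1,2) s(2)] ss(1) by metis
    moreover have "length ?last = Suc f" using ss(2) False by simp
    then have "length b \<le> f" using arg_cong[OF ab, of length] by simp
    ultimately show ?thesis using accepts_or_confused_if_early[OF s(2) _ _ q] by simp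
  qed
qed

lemma acc_singleton_agree:
  assumes "p \<in> H" "q \<in> H" "acc p x r T = {v}"
  shows "acc q x r T = {v}"
proof -
  have only_v: "w = v" if "w \<in> acc q x r T" for w
    using accepts_or_confused_if_accepted[OF assms(2) that assms(1)] assms(3)
    unfolding accepts_or_confused_def by simp
  have "accepts_or_confused q v" using accepts_or_confused_if_accepted[OF assms(1) _ assms(2)] assms(3) by simp
  then have "v \<in> acc q x r T"
    unfolding accepts_or_confused_def using two_le_card_iff[OF finite_acc] only_v by blast
  then show ?thesis using only_v by blast
qed

lemma acc_from_honest_proposer:
  assumes "q \<in> H" "w \<in> acc q x r T" "x \<in> H"
  shows "mk r = Some x \<and> w = I r"
proof -
  obtain i where i: "i < T" "w \<in> set (chain_values N T (inbox q) q x r i)"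
    using assms(2) mem_acc_iff by blast
  then obtain k c where kc: "k \<in> {1..N}" "c \<in> set (tr ((r - 1) * T + i) k q)" "valid_chain N q x r i c"
      "chain_value c = w"
    by (auto simp: mem_chain_values)
  obtain ss where "chain_info c = Some (ss, x, r, w)"
    using valid_chain_info[OF kc(3)] kc(4) by auto
  then have "signed_proposal x r w \<in> subterms c" by (rule signed_proposal_in_chain)
  then show ?thesis
    using signed_proposal_genuine[OF round_step_in_execution[OF i(1)] kc(1,2) assms(3)] by blast
qed

lemma acc_of_honest_marker:
  assumes x: "x \<in> H" and mk: "mk r = Some x" and q: "q \<in> H"
  shows "acc q x r T = {I r}"
proof -
  obtain c where c: "c \<in> H" "committee f c" using honest_committee_member by blast
  have "tr ((r - 1) * T) x c = [signed_proposal x r (I r)]"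
    using honest_send[OF x round_step_in_execution[of 0], of c] round_step_div_mod[of 0] mk c(2)
    by (simp add: Let_def)
  moreover have "valid_chain N c x r 0 (signed_proposal x r (I r))"
    "chain_value (signed_proposal x r (I r)) = I r"
    by (simp_all add: valid_chain_def chain_value_def)
  ultimately have "I r \<in> set (chain_values N T (inbox c) c x r 0)"
    using x unfolding mem_chain_values by force
  then have "accepts_or_confused q (I r)"
    using accepts_or_confused_if_early[OF c(1) _ _ q, of "I r" 1] by (simp add: acc_Suc)
  then show ?thesis
    using acc_from_honest_proposer[OF q _ x] two_le_card_iff[OF finite_acc]
    unfolding accepts_or_confused_def by blast
qed

lemma acc_of_honest_non_marker:
  assumes "x \<in> H" "mk r \<noteq> Some x" "q \<in> H"
  shows "acc q x r T = {}"
  using acc_from_honest_proposer[OF assms(3) _ assms(1)] assms(2) by blast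

end

context marker_execution
begin

lemma bel_1: "bel p 1 = Some 1"
  by (simp add: bel_def)

lemma bel_Suc: "1 \<le> r \<Longrightarrow> bel p (Suc r) = (case bel p r of
      None \<Rightarrow> None
    | Some x \<Rightarrow> if card (acc p x r T) = 1 then Some (the_elem (acc p x r T)) else None)"
  unfolding bel_def acc_def by (cases r) auto

lemma mk_Suc_cases:
  assumes "1 \<le> r"
  obtains "mk (Suc r) = None" | m where "mk (Suc r) = Some m" "m \<in> H" "is_marked (dec m r)"
proof (cases "\<exists>!i. i \<in> H \<and> is_marked (dec i r)")
  case True
  then have "(THE i. i \<in> H \<and> is_marked (dec i r)) \<in> H \<and> is_marked (dec (THE i. i \<in> H \<and> is_marked (dec i r)) r)"
    by (rule theI')
  then show ?thesis using that mk_Suc[OF assms] True by simp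
next
  case False
  then show ?thesis using that mk_Suc[OF assms] by simp
qed

definition belief_invariant :: "nat \<Rightarrow> bool" where
  "belief_invariant r \<longleftrightarrow>
     (\<exists>\<beta>. (\<forall>p\<in>H. bel p r = \<beta>) \<and> (\<forall>m. mk r = Some m \<longrightarrow> m \<in> H \<and> \<beta> = Some m))"

lemma belief_invariant_1: "belief_invariant 1"
  unfolding belief_invariant_def using bel_1 mk_1 f_less_N by (intro exI[of _ "Some 1"]) auto

lemma round_without_belief:
  assumes r: "1 \<le> r" and none: "\<forall>p\<in>H. bel p r = None" and mk: "mk r = None"
  shows "round_ok N T (marker_protocol N f) C I tr mk r \<and> belief_invariant (Suc r)"
proof -
  have unmarked: "dec p r = Unmarked" if "p \<in> H" for p
    using honest_decision[OF r] none that by simp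
  then have none_marked: "{i \<in> H. is_marked (dec i r)} = {}" by (auto simp: is_marked_def)
  moreover have "\<forall>i d. mk r = None \<and> i \<in> H \<and> dec i r = Marked d \<longrightarrow> d \<notin> Some ` H"
    using unmarked by fastforce
  ultimately have "round_ok N T (marker_protocol N f) C I tr mk r"
    unfolding round_ok_def none_marked using mk by simp
  moreover have "mk (Suc r) = None"
    using mk_Suc_cases[OF r] unmarked by (metis is_marked_def)
  then have "belief_invariant (Suc r)"
    unfolding belief_invariant_def using bel_Suc[OF r] none by (intro exI[of _ None]) auto
  ultimately show ?thesis by blast
qed

end

context marker_round
begin

lemma decision_in_round: "p \<in> H \<Longrightarrow> dec p r = (if acc p x r T = {p} then Marked (Some x) else Unmarked)"
  using honest_decision[OF round_pos] belief_agreed by simp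

lemma round_ok_in_round:
  assumes believed: "\<forall>m. mk r = Some m \<longrightarrow> x = m"
  shows "round_ok N T (marker_protocol N f) C I tr mk r"
proof -
  have marked: "{i \<in> H. is_marked (dec i r)} = {i \<in> H. acc i x r T = {i}}"
    using decision_in_round by (auto simp: is_marked_def split: if_splits)
  have "\<forall>a\<in>{i \<in> H. acc i x r T = {i}}. \<forall>b\<in>{i \<in> H. acc i x r T = {i}}. a = b"
    using acc_singleton_agree by blast
  then have "card {i \<in> H. acc i x r T = {i}} \<le> 1"
    using card_le_Suc0_iff_eq[of "{i \<in> H. acc i x r T = {i}}"] by simp
  moreover have "dec n r = Marked (Some m)"
    if "mk r = Some m" "m \<in> H" "I r = n" "n \<in> H" for m n
  proof -
    have "x = m" using believed that(1) by blast
    then have "acc n x r T = {n}" using acc_of_honest_marker that by simp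
    then show ?thesis using decision_in_round[OF that(4)] \<open>x = m\<close> by simp
  qed
  moreover have "d \<notin> Some ` H" if "mk r = None" "i \<in> H" "dec i r = Marked d" for i d
  proof
    assume "d \<in> Some ` H"
    moreover have "acc i x r T = {i}" "d = Some x"
      using that decision_in_round[of i] by (auto split: if_splits)
    ultimately show False using acc_of_honest_non_marker[of i] that by auto
  qed
  ultimately show ?thesis unfolding round_ok_def marked by blast
qed

lemma next_belief:
  "p \<in> H \<Longrightarrow> bel p (Suc r) = (if card (acc p x r T) = 1 then Some (the_elem (acc p x r T)) else None)"
  using bel_Suc[OF round_pos] belief_agreed by simp

lemma next_belief_agree:
  assumes "p \<in> H" "q \<in> H"
  shows "bel p (Suc r) = bel q (Suc r)"
proof -
  have "acc p x r T = {v} \<longleftrightarrow> acc q x r T = {v}" for v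
    using acc_singleton_agree assms by blast
  then have "card (acc p x r T) = 1 \<longleftrightarrow> card (acc q x r T) = 1"
    and "card (acc p x r T) = 1 \<Longrightarrow> acc p x r T = acc q x r T"
    by (auto simp: card_1_singleton_iff)
  then show ?thesis using next_belief assms by simp
qed

lemma next_marker_believed:
  assumes "mk (Suc r) = Some m"
  shows "m \<in> H \<and> bel m (Suc r) = Some m"
  using mk_Suc_cases[OF round_pos] assms
proof cases
  case (2 m')
  then have "m' = m" using assms by simp
  then have "acc m x r T = {m}" using 2 decision_in_round[of m] by (auto simp: is_marked_def split: if_splits)
  then show ?thesis using 2 assms next_belief[of m] by simp
qed simp

lemma belief_invariant_Suc: "belief_invariant (Suc r)"
proof -
  obtain p where p: "p \<in> H" using honest_committee_member by blast
  show ?thesis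
    unfolding belief_invariant_def using next_belief_agree[OF p] next_marker_believed
    by (intro exI[of _ "bel p (Suc r)"]) auto
qed

end

context marker_execution
begin

lemma belief_invariant_step:
  assumes r: "1 \<le> r" "r \<le> K" and inv: "belief_invariant r"
  shows "round_ok N T (marker_protocol N f) C I tr mk r \<and> belief_invariant (Suc r)"
proof -
  obtain \<beta> where \<beta>: "\<forall>p\<in>H. bel p r = \<beta>" "\<forall>m. mk r = Some m \<longrightarrow> m \<in> H \<and> \<beta> = Some m"
    using inv belief_invariant_def by blast
  show ?thesis
  proof (cases \<beta>)
    case None
    then show ?thesis using round_without_belief[OF r(1)] \<beta> by (metis option.distinct(1) not_None_eq)
  next
    case (Some x)
    then interpret marker_round N f K C I tr mk r x
      using r \<beta>(1) by unfold_locales auto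
    show ?thesis using round_ok_in_round belief_invariant_Suc \<beta>(2) Some by simp
  qed
qed

lemma belief_invariant_holds: "1 \<le> r \<Longrightarrow> r \<le> K \<Longrightarrow> belief_invariant r"
proof (induction r rule: dec_induct)
  case base
  show ?case by (rule belief_invariant_1)
next
  case (step r)
  then show ?case using belief_invariant_step by simp
qed

lemma round_ok: "r \<in> {1..K} \<Longrightarrow> round_ok N T (marker_protocol N f) C I tr mk r"
  using belief_invariant_step belief_invariant_holds by auto

end

section \<open>Complexity\<close>

context marker_execution
begin

lemma nsigs_honest_message:
  assumes "p \<in> H" "t < K * T" "m \<in> set (tr t p j)"
  shows "nsigs m \<le> T"
  using honest_message_cases[OF assms]
proof (elim disjE exE conjE)
  fix x v
  assume k: "t mod T \<noteq> 0" and v: "v \<in> set (relay p x (t div T + 1) (t mod T - 1))"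
    and m: "m = MSig p (witness p x (t div T + 1) (t mod T - 1) v)"
  obtain ss where "chain_info (witness p x (t div T + 1) (t mod T - 1) v) = Some (ss, x, t div T + 1, v)"
      "length ss = t mod T - 1"
    using valid_chain_info[OF witness_received(2)[OF v]] witness_received(3)[OF v] by auto
  then have "nsigs m = Suc (t mod T)" using nsigs_chain m k by simp
  moreover have "t mod T < T" by simp
  ultimately show ?thesis by linarith
qed (simp add: signed_proposal_def)

lemma sum_over_committee: "(\<Sum>j\<in>{1..N}. if committee f j then c else 0) = Suc f * c"
proof -
  have "{j \<in> {1..N}. committee f j} = {1..Suc f}" using f_less_N by (auto simp: committee_def)
  then show ?thesis by (simp flip: sum.inter_filter)
qed

definition fanout :: "nat \<Rightarrow> nat" where
  "fanout p = (if committee f p then N else Suc f)"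

definition relay_count :: "nat \<Rightarrow> nat \<Rightarrow> nat \<Rightarrow> nat" where
  "relay_count p r i = (case bel p r of None \<Rightarrow> 0 | Some x \<Rightarrow> length (relay p x r i))"

lemma sum_relay_count_le: "(\<Sum>i<n. relay_count p r i) \<le> 2"
  by (cases "bel p r") (simp_all add: relay_count_def relay_def sum_length_relayed_le)

lemma messages_first_step:
  assumes "p \<in> H" "1 \<le> r" "r \<le> K"
  shows "(\<Sum>j\<in>{1..N}. length (tr ((r - 1) * T) p j)) \<le> Suc f"
proof -
  have "length (tr ((r - 1) * T) p j) \<le> (if committee f j then 1 else 0)" for j
    using honest_send[OF assms(1) step_in_round(1)[OF assms(2,3), of 0]]
      step_in_round(2,3)[OF assms(2,3), of 0] by (simp add: Let_def)
  then have "(\<Sum>j\<in>{1..N}. length (tr ((r - 1) * T) p j)) \<le> (\<Sum>j\<in>{1..N}. if committee f j then 1 else 0)"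
    by (rule sum_mono)
  then show ?thesis by (simp only: sum_over_committee) simp
qed

lemma messages_relay_step:
  assumes "p \<in> H" "1 \<le> r" "r \<le> K" "Suc i < T"
  shows "(\<Sum>j\<in>{1..N}. length (tr ((r - 1) * T + Suc i) p j)) \<le> fanout p * relay_count p r i"
proof -
  let ?t = "(r - 1) * T + Suc i"
  have "length (tr ?t p j) \<le> (if committee f p \<or> committee f j then relay_count p r i else 0)" for j
    using honest_send[OF assms(1) step_in_round(1)[OF assms(2-4)]] step_in_round(2,3)[OF assms(2-4)]
    by (simp add: Let_def relay_count_def split: option.splits)
  then have "(\<Sum>j\<in>{1..N}. length (tr ?t p j))
      \<le> (\<Sum>j\<in>{1..N}. if committee f p \<or> committee f j then relay_count p r i else 0)"
    by (rule sum_mono)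
  also have "\<dots> = fanout p * relay_count p r i"
    using sum_over_committee[of "relay_count p r i"] by (simp add: fanout_def)
  finally show ?thesis .
qed

lemma messages_of_honest_process:
  assumes "p \<in> H" "1 \<le> r" "r \<le> K"
  shows "(\<Sum>t\<in>{(r - 1) * T..<r * T}. \<Sum>j\<in>{1..N}. length (tr t p j)) \<le> Suc f + 2 * fanout p"
proof -
  let ?sent = "\<lambda>t. \<Sum>j\<in>{1..N}. length (tr t p j)"
  have "r * T = T + (r - 1) * T" using assms(2) by (cases r) auto
  then have "(\<Sum>t\<in>{(r - 1) * T..<r * T}. ?sent t) = (\<Sum>k\<in>{0..<T}. ?sent (k + (r - 1) * T))"
    using sum.shift_bounds_nat_ivl[of ?sent 0 "(r - 1) * T" T] by simp
  also have "\<dots> = (\<Sum>k<Suc (Suc (Suc f)). ?sent ((r - 1) * T + k))"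
    unfolding atLeast0LessThan by (rule sum.cong) (auto simp: add.commute)
  also have "\<dots> = ?sent ((r - 1) * T) + (\<Sum>i<Suc (Suc f). ?sent ((r - 1) * T + Suc i))"
    by (subst sum.lessThan_Suc_shift) simp
  also have "\<dots> \<le> Suc f + (\<Sum>i<Suc (Suc f). fanout p * relay_count p r i)"
    using messages_first_step[OF assms] messages_relay_step[OF assms]
    by (intro add_mono sum_mono) auto
  also have "\<dots> = Suc f + fanout p * (\<Sum>i<Suc (Suc f). relay_count p r i)"
    by (simp only: sum_distrib_left)
  also have "\<dots> \<le> Suc f + fanout p * 2"
    by (intro add_left_mono mult_le_mono2 sum_relay_count_le)
  finally show ?thesis by simp
qed

lemma messages_in_round: "r \<in> {1..K} \<Longrightarrow> msgs_in_round N T C tr r \<le> 5 * N * Suc f"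
proof -
  assume r: "r \<in> {1..K}"
  have "msgs_in_round N T C tr r = (\<Sum>p\<in>H. \<Sum>t\<in>{(r - 1) * T..<r * T}. \<Sum>j\<in>{1..N}. length (tr t p j))"
    unfolding msgs_in_round_def by (rule sum.swap)
  also have "\<dots> \<le> (\<Sum>p\<in>H. Suc f + 2 * fanout p)"
    using messages_of_honest_process r by (intro sum_mono) auto
  also have "\<dots> \<le> (\<Sum>p\<in>{1..N}. Suc f + 2 * fanout p)"
    by (rule sum_mono2) auto
  also have "\<dots> \<le> (\<Sum>p\<in>{1..N}. 3 * Suc f + 2 * (if committee f p then N else 0))"
    by (rule sum_mono) (simp add: fanout_def)
  also have "\<dots> = (\<Sum>p\<in>{1..N}. 3 * Suc f) + 2 * (\<Sum>p\<in>{1..N}. if committee f p then N else 0)"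
    by (simp only: sum.distrib sum_distrib_left)
  also have "\<dots> = 5 * N * Suc f"
    by (simp only: sum_over_committee) (simp add: algebra_simps)
  finally show ?thesis .
qed

lemma signatures_in_round: "r \<in> {1..K} \<Longrightarrow> sigs_in_round N T C tr r \<le> T * msgs_in_round N T C tr r"
proof -
  assume r: "r \<in> {1..K}"
  have "sum_list (map nsigs (tr t i j)) \<le> T * length (tr t i j)"
    if "t \<in> {(r - 1) * T..<r * T}" "i \<in> H" for t i j
  proof -
    have "t < K * T" using that(1) r by (meson atLeastLessThan_iff atLeastAtMost_iff less_le_trans mult_le_mono1)
    then have "sum_list (map nsigs (tr t i j)) \<le> sum_list (map (\<lambda>_. T) (tr t i j))"
      using nsigs_honest_message[OF that(2)] by (intro sum_list_mono) auto
    then show ?thesis by (simp add: sum_list_triv mult.commute)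
  qed
  then show ?thesis
    unfolding sigs_in_round_def msgs_in_round_def sum_distrib_left by (intro sum_mono) auto
qed

end

lemma marker_protocol_solves:
  assumes "f < N"
  shows "marker_solution N f K (f + 3) (marker_protocol N f) (5 * N * (f + 1)) ((f + 3) * (5 * N * (f + 1)))"
  unfolding marker_solution_def
proof (intro allI impI)
  fix C I tr mk
  assume "C \<subseteq> {1..N} \<and> card C \<le> f \<and> (\<forall>r. I r \<in> {1..N}) \<and> execution N K (f + 3) (marker_protocol N f) C I tr mk"
  then interpret marker_execution N f K C I tr mk
    using assms by unfold_locales auto
  have "round_ok N T (marker_protocol N f) C I tr mk r \<and> msgs_in_round N T C tr r \<le> 5 * N * (f + 1)
      \<and> sigs_in_round N T C tr r \<le> T * (5 * N * (f + 1))" if r: "r \<in> {1..K}" for r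
  proof -
    have msgs: "msgs_in_round N T C tr r \<le> 5 * N * (f + 1)" using messages_in_round[OF r] by simp
    then have "sigs_in_round N T C tr r \<le> T * (5 * N * (f + 1))"
      using signatures_in_round[OF r] mult_le_mono2 order_trans by blast
    then show ?thesis using msgs round_ok[OF r] by blast
  qed
  then show "honest_sig_ok N K T C tr \<and> (\<forall>r\<in>{1..K}. round_ok N T (marker_protocol N f) C I tr mk r
      \<and> msgs_in_round N T C tr r \<le> 5 * N * (f + 1) \<and> sigs_in_round N T C tr r \<le> T * (5 * N * (f + 1)))"
    using honest_sig_ok by blast
qed

lemma marker_solution_mono:
  "marker_solution N f K T P M S \<Longrightarrow> M \<le> M' \<Longrightarrow> S \<le> S' \<Longrightarrow> marker_solution N f K T P M' S'"
  unfolding marker_solution_def by (meson order_trans)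

theorem mainTheorem3:
  shows "\<exists>c::nat. \<forall>N f K. f < N \<longrightarrow>
           (\<exists>T P. 1 \<le> T \<and> T \<le> c * (f + 1)
              \<and> marker_solution N f K T P (c * N * (f + 1)) (c * N * (f + 1)^2))"
proof (rule exI[of _ 15], intro allI impI)
  fix N f K :: nat
  assume "f < N"
  have "(f + 3) * (5 * N * (f + 1)) \<le> (3 * (f + 1)) * (5 * N * (f + 1))"
    by (intro mult_le_mono1) simp
  then have "(f + 3) * (5 * N * (f + 1)) \<le> 15 * N * (f + 1)^2"
    by (simp add: power2_eq_square algebra_simps)
  then have "marker_solution N f K (f + 3) (marker_protocol N f) (15 * N * (f + 1)) (15 * N * (f + 1)^2)"
    using marker_solution_mono[OF marker_protocol_solves[OF \<open>f < N\<close>]] by simp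
  then show "\<exists>T P. 1 \<le> T \<and> T \<le> 15 * (f + 1)
      \<and> marker_solution N f K T P (15 * N * (f + 1)) (15 * N * (f + 1)^2)"
    by (intro exI[of _ "f + 3"] exI[of _ "marker_protocol N f"]) simp
qed

end
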